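(* Let $f$ be a $2\pi$-periodic continuous function with modulus of continuity $\omega(t)$. Let $\{p_k\}_{k\ge0}$ be non-negative numbers with $P_n:=\sum_{k=0}^n p_k\ne0$ for all $n$, and define $a_{n,k}=p_{n-k}/P_n$ for $0\le k\le n$ and $a_{n,k}=0$ otherwise. Let $\beta\ge0$ and suppose \[ \sum_{k=m}^{\infty}(k+1)^{\beta}\left|\frac{a_{n,k}}{(k+1)^{\beta}}-\frac{a_{n,k+1}}{(k+2)^{\beta}}\right|=\mathcal{O}(a_{n,m}) \] for all $m=0,1,\dots,n$ and $n=0,1,\dots$. Suppose there is a function $H(u)\ge0$ such that $\int_u^{\pi} t^{-2}\omega(t)\,dt=\mathcal{O}(H(u))$ as $u\to+0$ and $\int_0^{t}H(u)\,du=\mathcal{O}(tH(t))$ as $t\to+0$. Then, with \[ N_n(f;x):=\frac{1}{P_n}\sum_{k=0}^n p_{n-k}S_k(f;x), \] we have \[ \|N_n(f)-f\|=\mathcal{O}\left(\frac{p_n}{P_n}H\left(\frac{p_n}{P_n}\right)\right). \]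
   Context: $S_k(f;x)$ is the $k$-th partial sum of the Fourier series of $f$ at $x$. $\|\cdot\|$ is the sup-norm. $\omega(\delta)=\sup_{|h|\le\delta}\sup_x|f(x+h)-f(x)|$. The notation $u=\mathcal{O}(v)$ means $u\le Cv$ for a positive constant $C$ (independent of $n$). *)

theory Defs
  imports "HOL-Analysis.Analysis"
begin

definition fourier_a :: "(real \<Rightarrow> real) \<Rightarrow> nat \<Rightarrow> real" where
  "fourier_a f j = (1 / pi) * integral {-pi..pi} (\<lambda>t. f t * cos (real j * t))"

definition fourier_b :: "(real \<Rightarrow> real) \<Rightarrow> nat \<Rightarrow> real" where
  "fourier_b f j = (1 / pi) * integral {-pi..pi} (\<lambda>t. f t * sin (real j * t))"

definition fourier_partial_sum :: "nat \<Rightarrow> (real \<Rightarrow> real) \<Rightarrow> real \<Rightarrow> real" where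
  "fourier_partial_sum k f x =
     fourier_a f 0 / 2 +
     (\<Sum>j=1..k. fourier_a f j * cos (real j * x) + fourier_b f j * sin (real j * x))"

definition sup_norm :: "(real \<Rightarrow> real) \<Rightarrow> real" where
  "sup_norm g = (SUP x. \<bar>g x\<bar>)"

definition modulus_of_continuity :: "(real \<Rightarrow> real) \<Rightarrow> real \<Rightarrow> real" where
  "modulus_of_continuity f \<delta> =
     (SUP h\<in>{-\<delta>..\<delta>}. SUP x. \<bar>f (x + h) - f x\<bar>)"

definition norlund_mean :: "(nat \<Rightarrow> real) \<Rightarrow> nat \<Rightarrow> (real \<Rightarrow> real) \<Rightarrow> real \<Rightarrow> real" where
  "norlund_mean p n f x =
     (1 / (\<Sum>k\<le>n. p k)) * (\<Sum>k\<le>n. p (n - k) * fourier_partial_sum k f x)"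

end

theory Submission
  imports Defs
begin

text \<open>
  Since the Dirichlet kernels D_k integrate to pi, N_n(f;x) - f(x) is (1/pi) times the integral
  over [-pi, pi] of (f(x+t) - f(x)) K_n(t), where K_n = sum_k a_{n,k} D_k is the Norlund kernel.
  Abel summation of sum_k a_{n,k} sin((k+1/2)t) against the weights (k+1)^beta turns the
  hypothesis on a_{n,k} into the kernel bounds |K_n(t)| = O(a_{n,0}/t^2) and |K_n(t)| = O(1/t)
  on (0, pi]; the second one splits K_n at the index m = ceiling(1/t) and uses (m+1) a_{n,m} = O(1),
  a consequence of the quasi-monotonicity a_{n,j} = O(a_{n,i}) for i <= j. Splitting the integral at
  l = a_{n,0} = p_n/P_n, the part over [0, l] is O(l H(l)) since omega(t)/t = O(H(t)) and the
  integral of H over [0, l] is O(l H(l)); the part over [l, pi] is O(l H(l)) since the integral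
  of omega(t)/t^2 over [l, pi] is O(H(l)).
\<close>

section \<open>Summation by parts and the Dirichlet kernel\<close>

lemma sum_by_parts:
  fixes b y :: "nat \<Rightarrow> 'a::comm_ring"
  shows "(\<Sum>j<N. b j * y j) = b N * (\<Sum>j<N. y j) - (\<Sum>j<N. (b (Suc j) - b j) * (\<Sum>i<Suc j. y i))"
  by (induction N) (simp_all add: algebra_simps)

lemma abs_sum_nondecreasing_weights_le:
  fixes w x :: "nat \<Rightarrow> real"
  assumes w_nonneg: "\<And>i. i \<le> N \<Longrightarrow> 0 \<le> w i"
    and w_mono: "\<And>i. i < N \<Longrightarrow> w i \<le> w (Suc i)"
    and partial_sums: "\<And>i. i \<le> N \<Longrightarrow> \<bar>\<Sum>j<i. x j\<bar> \<le> M"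
  shows "\<bar>\<Sum>i<N. w i * x i\<bar> \<le> 2 * w N * M"
proof -
  have "\<bar>\<Sum>i<N. w i * x i\<bar>
      \<le> \<bar>w N * (\<Sum>j<N. x j)\<bar> + \<bar>\<Sum>j<N. (w (Suc j) - w j) * (\<Sum>i<Suc j. x i)\<bar>"
    by (subst sum_by_parts) (rule abs_triangle_ineq4)
  also have "\<bar>w N * (\<Sum>j<N. x j)\<bar> \<le> w N * M"
    using w_nonneg[of N] partial_sums[of N] by (simp add: abs_mult mult_left_mono)
  also have "\<bar>\<Sum>j<N. (w (Suc j) - w j) * (\<Sum>i<Suc j. x i)\<bar> \<le> (\<Sum>j<N. (w (Suc j) - w j) * M)"
  proof (rule order_trans[OF sum_abs sum_mono])
    fix j assume "j \<in> {..<N}"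
    then have "0 \<le> w (Suc j) - w j" "\<bar>\<Sum>i<Suc j. x i\<bar> \<le> M" using w_mono partial_sums[of "Suc j"] by auto
    then show "\<bar>(w (Suc j) - w j) * (\<Sum>i<Suc j. x i)\<bar> \<le> (w (Suc j) - w j) * M"
      by (simp add: abs_mult mult_left_mono)
  qed
  also have "(\<Sum>j<N. (w (Suc j) - w j) * M) = (w N - w 0) * M"
    by (simp add: sum_distrib_right[symmetric] sum_lessThan_telescope)
  finally have "\<bar>\<Sum>i<N. w i * x i\<bar> \<le> w N * M + (w N - w 0) * M" by simp
  moreover have "0 \<le> w 0 * M" using w_nonneg[of 0] partial_sums[of 0] by simp
  ultimately show ?thesis by (simp add: algebra_simps)
qed

definition dirichlet_kernel :: "nat \<Rightarrow> real \<Rightarrow> real" where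
  "dirichlet_kernel k t = 1/2 + (\<Sum>j=1..k. cos (real j * t))"

lemma sin_half_mult_dirichlet_kernel:
  "2 * sin (t/2) * dirichlet_kernel k t = sin ((real k + 1/2) * t)"
proof (induction k)
  case (Suc k)
  have shift: "t/2 + real (Suc k) * t = (real (Suc k) + 1/2) * t" "t/2 - real (Suc k) * t = - ((real k + 1/2) * t)"
    by (simp_all add: algebra_simps)
  have "2 * sin (t/2) * cos (real (Suc k) * t) = sin ((real (Suc k) + 1/2) * t) - sin ((real k + 1/2) * t)"
    using sin_times_cos[of "t/2" "real (Suc k) * t"] unfolding shift by (simp add: mult.assoc)
  moreover have "dirichlet_kernel (Suc k) t = dirichlet_kernel k t + cos (real (Suc k) * t)"
    by (simp add: dirichlet_kernel_def)
  ultimately show ?case using Suc.IH by (simp add: distrib_left)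
qed (simp add: dirichlet_kernel_def)

lemma sin_half_mult_sum_sin:
  "2 * sin (t/2) * (\<Sum>j<l. sin ((real (m+j) + 1/2) * t)) = cos (real m * t) - cos (real (m+l) * t)"
proof (induction l)
  case (Suc l)
  have shift: "t/2 - (real (m+l) + 1/2) * t = - (real (m+l) * t)" "t/2 + (real (m+l) + 1/2) * t = real (m + Suc l) * t"
    by (simp_all add: algebra_simps)
  have "2 * sin (t/2) * sin ((real (m+l) + 1/2) * t) = cos (real (m+l) * t) - cos (real (m + Suc l) * t)"
    using sin_times_sin[of "t/2" "(real (m+l) + 1/2) * t"] unfolding shift by (simp add: mult.assoc)
  then show ?case using Suc.IH by (simp add: distrib_left)
qed simp

lemma abs_dirichlet_kernel_le: "\<bar>dirichlet_kernel k t\<bar> \<le> real k + 1"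
proof -
  have "\<bar>\<Sum>j=1..k. cos (real j * t)\<bar> \<le> (\<Sum>j=1..k. 1)"
    by (rule order_trans[OF sum_abs sum_mono]) simp
  then show ?thesis unfolding dirichlet_kernel_def by simp
qed

lemma dirichlet_kernel_minus [simp]: "dirichlet_kernel k (-t) = dirichlet_kernel k t"
  by (simp add: dirichlet_kernel_def)

lemma continuous_on_dirichlet_kernel [continuous_intros]:
  fixes f :: "real \<Rightarrow> real"
  assumes "continuous_on S f"
  shows "continuous_on S (\<lambda>x. dirichlet_kernel k (f x))"
  unfolding dirichlet_kernel_def by (intro continuous_intros assms)

lemma integral_cos_multiple:
  assumes "j \<noteq> 0"
  shows "integral {-pi..pi} (\<lambda>t. cos (real j * t)) = 0"
proof -
  have "((\<lambda>t. cos (real j * t)) has_integral (sin (real j * pi) / real j - sin (real j * (-pi)) / real j)) {-pi..pi}"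
  proof (rule fundamental_theorem_of_calculus)
    fix t
    have "((\<lambda>t. sin (real j * t) / real j) has_real_derivative cos (real j * t)) (at t within {-pi..pi})"
      using assms by (auto intro!: derivative_eq_intros)
    then show "((\<lambda>t. sin (real j * t) / real j) has_vector_derivative cos (real j * t)) (at t within {-pi..pi})"
      by (simp add: has_real_derivative_iff_has_vector_derivative)
  qed simp
  then show ?thesis by (simp add: integral_unique)
qed

lemma integral_dirichlet_kernel: "integral {-pi..pi} (dirichlet_kernel k) = pi"
proof -
  have cos_int: "(\<lambda>t. cos (real j * t)) integrable_on {-pi..pi}" for j
    by (intro integrable_continuous_real continuous_intros)
  have "integral {-pi..pi} (dirichlet_kernel k)
      = integral {-pi..pi} (\<lambda>t. 1/2) + integral {-pi..pi} (\<lambda>t. \<Sum>j=1..k. cos (real j * t))"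
    unfolding dirichlet_kernel_def
    by (rule integral_add) (auto intro!: integrable_continuous_real continuous_intros)
  also have "integral {-pi..pi} (\<lambda>t. \<Sum>j=1..k. cos (real j * t))
      = (\<Sum>j=1..k. integral {-pi..pi} (\<lambda>t. cos (real j * t)))"
    by (rule integral_sum) (simp_all add: cos_int)
  also have "\<dots> = 0"
    by (rule sum.neutral) (simp add: integral_cos_multiple)
  finally show ?thesis by simp
qed

lemma sin_half_ge_sixth:
  assumes "0 \<le> t" "t \<le> pi"
  shows "t/6 \<le> sin (t/2)"
proof -
  have "\<bar>sin (t/2) - (\<Sum>m<3. sin_coeff m * (t/2) ^ m)\<bar> \<le> inverse (fact 3) * \<bar>t/2\<bar> ^ 3"
    by (rule Maclaurin_sin_bound)
  moreover have "(\<Sum>m<3. sin_coeff m * (t/2) ^ m) = t/2"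
    by (simp add: numeral_3_eq_3 sin_coeff_def)
  ultimately have "t/2 - (t/2)^3/6 \<le> sin (t/2)"
    using assms by (simp add: fact_numeral abs_if split: if_splits)
  moreover have "(t/2)^3 \<le> 4 * (t/2)"
  proof -
    have "(t/2)^2 \<le> 2^2" using assms pi_less_4 by (intro power_mono) auto
    then have "(t/2)^2 * (t/2) \<le> 4 * (t/2)" using assms by (intro mult_right_mono) auto
    then show ?thesis by (simp add: power3_eq_cube power2_eq_square)
  qed
  ultimately show ?thesis by simp
qed

section \<open>Fourier partial sums as Dirichlet integrals\<close>

lemma periodic_plus_of_int:
  fixes g :: "real \<Rightarrow> 'a"
  assumes "\<And>x. g (x + 2*pi) = g x"
  shows "g (x + of_int k * (2*pi)) = g x"
proof -
  interpret periodic_fun_simple g "2*pi" by unfold_locales (rule assms)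
  show ?thesis by (rule plus_of_int)
qed

lemma decompose_mod_2pi:
  obtains x0 k where "x = x0 + of_int k * (2*pi)" "0 \<le> x0" "x0 < 2*pi"
proof
  define k where "k = \<lfloor>x / (2*pi)\<rfloor>"
  have eq: "x - of_int k * (2*pi) = 2*pi * frac (x / (2*pi))"
    unfolding k_def frac_def by (simp add: algebra_simps)
  show "x = (x - of_int k * (2*pi)) + of_int k * (2*pi)" by simp
  show "0 \<le> x - of_int k * (2*pi)" unfolding eq by simp
  show "x - of_int k * (2*pi) < 2*pi" unfolding eq using frac_lt_1 by simp
qed

lemma integral_periodic_shift:
  fixes g :: "real \<Rightarrow> real"
  assumes cont: "continuous_on UNIV g" and per: "\<And>x. g (x + 2*pi) = g x"
  shows "integral {-pi..pi} (\<lambda>t. g (x + t)) = integral {-pi..pi} g"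
proof -
  obtain x0 k where x: "x = x0 + of_int k * (2*pi)" and x0: "0 \<le> x0" "x0 < 2*pi"
    by (rule decompose_mod_2pi)
  have int: "g integrable_on {a..b}" for a b
    by (rule integrable_continuous_real) (rule continuous_on_subset[OF cont], simp)
  have "g (x + t) = g (t + x0)" for t
    using periodic_plus_of_int[of g, OF per, of "t + x0" k] by (simp add: x algebra_simps)
  then have "integral {-pi..pi} (\<lambda>t. g (x + t)) = integral {-pi..pi} (\<lambda>t. g (t + x0))"
    by simp
  also have "\<dots> = integral {x0 - pi..x0 + pi} g"
    using integral_shift_real_ivl[of "x0 - pi" x0 "x0 + pi" g] by simp
  also have "\<dots> = integral {x0 - pi..pi} g + integral {pi..x0 + pi} g"
    using x0 Henstock_Kurzweil_Integration.integral_combine[of "x0 - pi" pi "x0 + pi" g] int by simp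
  also have "integral {pi..x0 + pi} g = integral {-pi..x0 - pi} g"
  proof -
    have "pi - 2*pi = -pi" "x0 + pi - 2*pi = x0 - pi" by simp_all
    then show ?thesis using integral_shift_real_ivl[of pi "2*pi" "x0 + pi" g] by (simp add: per)
  qed
  also have "integral {x0 - pi..pi} g + integral {-pi..x0 - pi} g = integral {-pi..pi} g"
    using x0 Henstock_Kurzweil_Integration.integral_combine[of "-pi" "x0 - pi" pi g] int by simp
  finally show ?thesis .
qed

lemma periodic_continuous_bounded:
  fixes g :: "real \<Rightarrow> real"
  assumes cont: "continuous_on UNIV g" and per: "\<And>x. g (x + 2*pi) = g x"
  obtains B where "\<And>y. \<bar>g y\<bar> \<le> B"
proof -
  have "compact (g ` {0..2*pi})"
    by (rule compact_continuous_image) (auto intro: continuous_on_subset[OF cont])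
  then obtain B where B: "\<And>z. z \<in> g ` {0..2*pi} \<Longrightarrow> \<bar>z\<bar> \<le> B"
    using compact_imp_bounded bounded_real by metis
  have "\<bar>g y\<bar> \<le> B" for y
  proof -
    obtain y0 k where "y = y0 + of_int k * (2*pi)" "0 \<le> y0" "y0 < 2*pi"
      by (rule decompose_mod_2pi)
    then show ?thesis using B periodic_plus_of_int[of g, OF per] by auto
  qed
  then show ?thesis by (rule that)
qed

lemma fourier_term_eq_integral:
  fixes f :: "real \<Rightarrow> real"
  assumes cont: "continuous_on UNIV f" and per: "\<And>x. f (x + 2*pi) = f x"
  shows "fourier_a f j * cos (real j * x) + fourier_b f j * sin (real j * x)
         = (1/pi) * integral {-pi..pi} (\<lambda>t. f (x + t) * cos (real j * t))"
proof -
  note fc = continuous_on_compose2[OF cont _ subset_UNIV]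
  define g where "g s = f s * cos (real j * (s - x))" for s
  have "fourier_a f j * cos (real j * x) + fourier_b f j * sin (real j * x)
      = (1/pi) * (integral {-pi..pi} (\<lambda>s. f s * cos (real j * s) * cos (real j * x))
                 + integral {-pi..pi} (\<lambda>s. f s * sin (real j * s) * sin (real j * x)))"
    unfolding fourier_a_def fourier_b_def integral_mult_left by (simp add: algebra_simps)
  also have "\<dots> = (1/pi) * integral {-pi..pi} g"
  proof -
    have "g = (\<lambda>s. f s * cos (real j * s) * cos (real j * x) + f s * sin (real j * s) * sin (real j * x))"
      by (rule ext) (simp add: g_def right_diff_distrib cos_diff algebra_simps)
    then show ?thesis
      by (simp add: integral_add integrable_continuous_real continuous_intros fc)
  qed
  also have "integral {-pi..pi} g = integral {-pi..pi} (\<lambda>t. g (x + t))"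
  proof (rule integral_periodic_shift[symmetric])
    show "continuous_on UNIV g" unfolding g_def by (intro continuous_intros fc)
    fix s
    have "real j * (s + 2*pi - x) = real j * (s - x) + of_nat j * (2 * of_real pi)"
      by (simp add: algebra_simps)
    then show "g (s + 2*pi) = g s" unfolding g_def by (simp only: per cos.plus_of_nat)
  qed
  finally show ?thesis by (simp add: g_def)
qed

lemma fourier_partial_sum_eq_integral:
  fixes f :: "real \<Rightarrow> real"
  assumes cont: "continuous_on UNIV f" and per: "\<And>x. f (x + 2*pi) = f x"
  shows "fourier_partial_sum k f x = (1/pi) * integral {-pi..pi} (\<lambda>t. f (x + t) * dirichlet_kernel k t)"
proof -
  note fc = continuous_on_compose2[OF cont _ subset_UNIV]
  have int: "(\<lambda>t. f (x + t) * c) integrable_on {-pi..pi}"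
    "(\<lambda>t. f (x + t) * cos (real j * t)) integrable_on {-pi..pi}"
    "(\<lambda>t. \<Sum>j=1..k. f (x + t) * cos (real j * t)) integrable_on {-pi..pi}" for c j
    by (intro integrable_continuous_real continuous_intros fc)+
  have "integral {-pi..pi} (\<lambda>t. f (x + t) * dirichlet_kernel k t)
      = integral {-pi..pi} (\<lambda>t. f (x + t) * (1/2) + (\<Sum>j=1..k. f (x + t) * cos (real j * t)))"
    unfolding dirichlet_kernel_def by (simp add: algebra_simps sum_distrib_left)
  also have "\<dots> = integral {-pi..pi} (\<lambda>t. f (x + t) * (1/2))
                  + (\<Sum>j=1..k. integral {-pi..pi} (\<lambda>t. f (x + t) * cos (real j * t)))"
    by (simp only: integral_add int integral_sum finite_atLeastAtMost)
  also have "integral {-pi..pi} (\<lambda>t. f (x + t) * (1/2)) = integral {-pi..pi} f / 2"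
    using integral_periodic_shift[OF cont per, of x] by (simp add: integral_mult_left)
  finally show ?thesis
    unfolding fourier_partial_sum_def fourier_term_eq_integral[OF cont per]
    by (simp add: fourier_a_def sum_distrib_left algebra_simps)
qed

lemma fourier_partial_sum_minus_eq_integral:
  fixes f :: "real \<Rightarrow> real"
  assumes cont: "continuous_on UNIV f" and per: "\<And>x. f (x + 2*pi) = f x"
  shows "fourier_partial_sum k f x - f x
         = (1/pi) * integral {-pi..pi} (\<lambda>t. (f (x + t) - f x) * dirichlet_kernel k t)"
proof -
  note fc = continuous_on_compose2[OF cont _ subset_UNIV]
  have "integral {-pi..pi} (\<lambda>t. (f (x + t) - f x) * dirichlet_kernel k t)
      = integral {-pi..pi} (\<lambda>t. f (x + t) * dirichlet_kernel k t - f x * dirichlet_kernel k t)"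
    by (simp add: algebra_simps)
  also have "\<dots> = integral {-pi..pi} (\<lambda>t. f (x + t) * dirichlet_kernel k t) - f x * pi"
    by (subst integral_diff)
       (auto simp: integral_dirichlet_kernel intro!: integrable_continuous_real continuous_intros fc)
  finally show ?thesis
    unfolding fourier_partial_sum_eq_integral[OF cont per] by (simp add: field_simps)
qed

definition norlund_kernel :: "(nat \<Rightarrow> real) \<Rightarrow> nat \<Rightarrow> real \<Rightarrow> real" where
  "norlund_kernel A n t = (\<Sum>k\<le>n. A k * dirichlet_kernel k t)"

lemma norlund_kernel_minus [simp]: "norlund_kernel A n (-t) = norlund_kernel A n t"
  by (simp add: norlund_kernel_def)

lemma continuous_on_norlund_kernel [continuous_intros]: "continuous_on S (norlund_kernel A n)"
  unfolding norlund_kernel_def by (intro continuous_intros)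

lemma norlund_mean_minus_eq_integral:
  fixes f :: "real \<Rightarrow> real"
  assumes cont: "continuous_on UNIV f" and per: "\<And>x. f (x + 2*pi) = f x"
    and P_nz: "(\<Sum>k\<le>n. p k) \<noteq> 0"
    and A: "\<And>k. k \<le> n \<Longrightarrow> A k = p (n - k) / (\<Sum>k\<le>n. p k)"
  shows "norlund_mean p n f x - f x
         = (1/pi) * integral {-pi..pi} (\<lambda>t. (f (x + t) - f x) * norlund_kernel A n t)"
proof -
  note fc = continuous_on_compose2[OF cont _ subset_UNIV]
  have "(\<Sum>k\<le>n. p (n - k)) = (\<Sum>k\<le>n. p k)"
    using sum.atLeastAtMost_rev[of p 0 n] by (simp add: atMost_atLeast0)
  then have A_sum: "(\<Sum>k\<le>n. A k) = 1"
    using A P_nz by (simp add: sum_divide_distrib[symmetric])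
  have "norlund_mean p n f x = (\<Sum>k\<le>n. A k * fourier_partial_sum k f x)"
    unfolding norlund_mean_def sum_distrib_left using A by (intro sum.cong) auto
  then have "norlund_mean p n f x - f x = (\<Sum>k\<le>n. A k * (fourier_partial_sum k f x - f x))"
    using A_sum by (simp add: sum_distrib_right[symmetric] right_diff_distrib sum_subtractf)
  also have "\<dots>
      = (1/pi) * (\<Sum>k\<le>n. integral {-pi..pi} (\<lambda>t. A k * ((f (x + t) - f x) * dirichlet_kernel k t)))"
    by (simp add: fourier_partial_sum_minus_eq_integral[OF cont per] sum_distrib_left integral_mult_right)
  also have "(\<Sum>k\<le>n. integral {-pi..pi} (\<lambda>t. A k * ((f (x + t) - f x) * dirichlet_kernel k t)))
      = integral {-pi..pi} (\<lambda>t. (f (x + t) - f x) * norlund_kernel A n t)"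
    unfolding norlund_kernel_def sum_distrib_left
    by (subst integral_sum) (auto simp: mult_ac intro!: integrable_continuous_real continuous_intros fc)
  finally show ?thesis .
qed

context
  fixes f :: "real \<Rightarrow> real" and B :: real
  assumes bounded: "\<And>y. \<bar>f y\<bar> \<le> B"
begin

private lemma abs_difference_le: "\<bar>f (x + h) - f x\<bar> \<le> 2 * B"
  using abs_triangle_ineq4[of "f (x + h)" "f x"] bounded[of "x + h"] bounded[of x] by linarith

private lemma bdd_above_differences: "bdd_above (range (\<lambda>x. \<bar>f (x + h) - f x\<bar>))"
  by (intro bdd_aboveI2[where M="2 * B"] abs_difference_le)

private lemma bdd_above_sup_differences:
  "bdd_above ((\<lambda>h. SUP x. \<bar>f (x + h) - f x\<bar>) ` S)"
  by (intro bdd_aboveI2[where M="2 * B"] cSUP_least abs_difference_le) simp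

lemma modulus_of_continuity_ge:
  assumes "\<bar>h\<bar> \<le> \<delta>"
  shows "\<bar>f (x + h) - f x\<bar> \<le> modulus_of_continuity f \<delta>"
proof -
  have "\<bar>f (x + h) - f x\<bar> \<le> (SUP x. \<bar>f (x + h) - f x\<bar>)"
    by (rule cSUP_upper[OF _ bdd_above_differences]) simp
  also have "\<dots> \<le> modulus_of_continuity f \<delta>"
    unfolding modulus_of_continuity_def using assms
    by (intro cSUP_upper[OF _ bdd_above_sup_differences]) auto
  finally show ?thesis .
qed

lemma modulus_of_continuity_nonneg: "0 \<le> \<delta> \<Longrightarrow> 0 \<le> modulus_of_continuity f \<delta>"
  using modulus_of_continuity_ge[of 0 \<delta> 0] by simp

lemma mono_on_modulus_of_continuity: "mono_on {0..} (modulus_of_continuity f)"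
  unfolding modulus_of_continuity_def
  by (intro mono_onI cSUP_subset_mono bdd_above_sup_differences bdd_above_differences) auto

end

section \<open>The Norlund kernel\<close>

definition weighted_difference :: "real \<Rightarrow> (nat \<Rightarrow> real) \<Rightarrow> nat \<Rightarrow> real" where
  "weighted_difference \<beta> A j =
     (real j + 1) powr \<beta> * \<bar>A j / (real j + 1) powr \<beta> - A (Suc j) / (real (Suc j) + 1) powr \<beta>\<bar>"

lemma weighted_difference_nonneg: "0 \<le> weighted_difference \<beta> A j"
  by (simp add: weighted_difference_def)

lemma powr_Suc_le:
  assumes "0 \<le> \<beta>"
  shows "(real (Suc j) + 1) powr \<beta> \<le> 2 powr \<beta> * (real j + 1) powr \<beta>"
proof -
  have "(real (Suc j) + 1) powr \<beta> \<le> (2 * (real j + 1)) powr \<beta>"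
    using assms by (intro powr_mono2) auto
  also have "\<dots> = 2 powr \<beta> * (real j + 1) powr \<beta>"
    using powr_mult[of 2 "real j + 1" \<beta>] by simp
  finally show ?thesis .
qed

lemma abs_weighted_sin_partial_sum_le:
  assumes t: "0 < t" "t \<le> pi" and \<beta>: "0 \<le> \<beta>"
  shows "\<bar>\<Sum>i<Suc k. (real (m+i) + 1) powr \<beta> * sin ((real (m+i) + 1/2) * t)\<bar>
           \<le> 2 * 2 powr \<beta> * (real (m+k) + 1) powr \<beta> / sin (t/2)"
proof -
  define s where "s = sin (t/2)"
  have s: "0 < s" unfolding s_def using t by (intro sin_gt_zero) auto
  have sin_sums: "\<bar>\<Sum>j<i. sin ((real (m+j) + 1/2) * t)\<bar> \<le> 1/s" for i
  proof -
    have "2 * s * \<bar>\<Sum>j<i. sin ((real (m+j) + 1/2) * t)\<bar>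
        = \<bar>2 * s * (\<Sum>j<i. sin ((real (m+j) + 1/2) * t))\<bar>"
      using s by (simp add: abs_mult)
    also have "\<dots> = \<bar>cos (real m * t) - cos (real (m+i) * t)\<bar>"
      by (simp only: s_def sin_half_mult_sum_sin)
    also have "\<dots> \<le> 2"
      using abs_cos_le_one[of "real m * t"] abs_cos_le_one[of "real (m+i) * t"] by linarith
    finally show ?thesis using s by (simp add: field_simps)
  qed
  have "\<bar>\<Sum>i<Suc k. (real (m+i) + 1) powr \<beta> * sin ((real (m+i) + 1/2) * t)\<bar>
      \<le> 2 * (real (m + Suc k) + 1) powr \<beta> * (1/s)"
    by (rule abs_sum_nondecreasing_weights_le) (use \<beta> sin_sums in \<open>auto intro!: powr_mono2\<close>)
  also have "\<dots> \<le> 2 * (2 powr \<beta> * (real (m+k) + 1) powr \<beta>) * (1/s)"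
    using powr_Suc_le[OF \<beta>, of "m+k"] s by (intro mult_right_mono mult_left_mono) auto
  finally show ?thesis by (simp add: s_def)
qed

lemma abs_weighted_sin_sum_le:
  fixes A :: "nat \<Rightarrow> real"
  assumes t: "0 < t" "t \<le> pi" and \<beta>: "0 \<le> \<beta>" and "m \<le> n" and A_Suc_n: "A (Suc n) = 0"
  shows "\<bar>\<Sum>k=m..n. A k * sin ((real k + 1/2) * t)\<bar>
           \<le> 2 * 2 powr \<beta> / sin (t/2) * (\<Sum>l=m..n. weighted_difference \<beta> A l)"
proof -
  define N where "N = Suc n - m"
  define b where "b = (\<lambda>k. A (m+k) / (real (m+k) + 1) powr \<beta>)"
  define y where "y = (\<lambda>k. (real (m+k) + 1) powr \<beta> * sin ((real (m+k) + 1/2) * t))"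
  have shift: "(\<Sum>k=m..n. F k) = (\<Sum>k<N. F (m+k))" for F :: "nat \<Rightarrow> real"
    using sum.atLeastAtMost_shift_0[OF \<open>m \<le> n\<close>, of F] \<open>m \<le> n\<close>
    by (simp add: N_def atLeast0AtMost lessThan_Suc_atMost[symmetric] Suc_diff_le)
  have b_N: "b N = 0"
    using \<open>m \<le> n\<close> A_Suc_n by (simp add: b_def N_def)
  have "(\<Sum>k=m..n. A k * sin ((real k + 1/2) * t)) = (\<Sum>k<N. b k * y k)"
    unfolding shift by (simp add: b_def y_def)
  also have "\<dots> = - (\<Sum>k<N. (b (Suc k) - b k) * (\<Sum>i<Suc k. y i))"
    by (subst sum_by_parts) (simp add: b_N)
  finally have "\<bar>\<Sum>k=m..n. A k * sin ((real k + 1/2) * t)\<bar>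
      = \<bar>\<Sum>k<N. (b (Suc k) - b k) * (\<Sum>i<Suc k. y i)\<bar>"
    by simp
  also have "\<dots>
      \<le> (\<Sum>k<N. \<bar>b (Suc k) - b k\<bar> * (2 * 2 powr \<beta> * (real (m+k) + 1) powr \<beta> / sin (t/2)))"
  proof (rule order_trans[OF sum_abs sum_mono])
    fix k
    show "\<bar>(b (Suc k) - b k) * (\<Sum>i<Suc k. y i)\<bar>
        \<le> \<bar>b (Suc k) - b k\<bar> * (2 * 2 powr \<beta> * (real (m+k) + 1) powr \<beta> / sin (t/2))"
      unfolding abs_mult y_def by (intro mult_left_mono abs_weighted_sin_partial_sum_le[OF t \<beta>]) simp
  qed
  also have "\<dots> = 2 * 2 powr \<beta> / sin (t/2) * (\<Sum>k<N. weighted_difference \<beta> A (m+k))"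
    unfolding sum_distrib_left weighted_difference_def b_def
    by (intro sum.cong) (simp_all add: abs_minus_commute)
  also have "(\<Sum>k<N. weighted_difference \<beta> A (m+k)) = (\<Sum>l=m..n. weighted_difference \<beta> A l)"
    by (rule shift[symmetric])
  finally show ?thesis .
qed

text \<open>
  A stands for the row a_{n,-} of the Norlund matrix for a fixed n. As A vanishes beyond n,
  the series in the hypothesis of the theorem is the finite sum in tail_variation_le.
\<close>

locale norlund_weights =
  fixes \<beta> C :: real and A :: "nat \<Rightarrow> real" and n :: nat
  assumes beta_nonneg: "0 \<le> \<beta>" and C_pos: "0 < C"
    and nonneg: "0 \<le> A k"
    and vanish: "n < k \<Longrightarrow> A k = 0"
    and sum_eq_1: "(\<Sum>k\<le>n. A k) = 1"
    and tail_variation_le: "m \<le> n \<Longrightarrow> (\<Sum>l=m..n. weighted_difference \<beta> A l) \<le> C * A m"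
begin

abbreviation kernel_bound :: real where
  "kernel_bound \<equiv> 5 + 36 * 2 powr \<beta> * C * (1 + C)"

lemma weight_le_tail_variation:
  assumes "j \<le> n"
  shows "A j \<le> (\<Sum>l=j..n. weighted_difference \<beta> A l)"
proof -
  define b where "b l = A l / (real l + 1) powr \<beta>" for l
  have b_j: "b j = (\<Sum>l=j..n. b l - b (Suc l))"
    using sum_Suc_diff[of j n b] assms vanish[of "Suc n"] by (simp add: b_def sum_subtractf)
  have "A j = (real j + 1) powr \<beta> * b j"
    by (simp add: b_def)
  also have "\<dots> = (real j + 1) powr \<beta> * (\<Sum>l=j..n. b l - b (Suc l))"
    using b_j by simp
  also have "\<dots> \<le> (real j + 1) powr \<beta> * (\<Sum>l=j..n. \<bar>b l - b (Suc l)\<bar>)"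
    by (intro mult_left_mono sum_mono) auto
  also have "\<dots> \<le> (\<Sum>l=j..n. weighted_difference \<beta> A l)"
    unfolding sum_distrib_left weighted_difference_def b_def
    by (intro sum_mono mult_right_mono powr_mono2 beta_nonneg) auto
  finally show ?thesis .
qed

lemma weight_quasi_mono:
  assumes "i \<le> j" "j \<le> n"
  shows "A j \<le> C * A i"
proof -
  have "A j \<le> (\<Sum>l=j..n. weighted_difference \<beta> A l)"
    using assms by (intro weight_le_tail_variation) auto
  also have "\<dots> \<le> (\<Sum>l=i..n. weighted_difference \<beta> A l)"
    using assms by (intro sum_mono2) (auto simp: weighted_difference_nonneg)
  also have "\<dots> \<le> C * A i"
    using assms by (intro tail_variation_le) auto
  finally show ?thesis .
qed

lemma weight_nonzero_le: "A k \<noteq> 0 \<Longrightarrow> k \<le> n"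
  using vanish by (meson not_le)

lemma sum_weights_le_1:
  assumes "finite S"
  shows "sum A S \<le> 1"
proof -
  have "sum A S = sum A (S \<inter> {..n})"
    using assms by (intro sum.mono_neutral_right) (auto intro: weight_nonzero_le)
  also have "\<dots> \<le> sum A {..n}"
    by (intro sum_mono2) (auto simp: nonneg)
  finally show ?thesis by (simp add: sum_eq_1)
qed

lemma weight_decay: "real (m + 1) * A m \<le> C"
proof (cases "m \<le> n")
  case True
  have "real (m + 1) * A m = (\<Sum>i\<le>m. A m)" by simp
  also have "\<dots> \<le> (\<Sum>i\<le>m. C * A i)"
    using True by (intro sum_mono weight_quasi_mono) auto
  also have "\<dots> \<le> C"
    using sum_weights_le_1[of "{..m}"] C_pos by (simp add: sum_distrib_left[symmetric])
  finally show ?thesis .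
qed (use C_pos vanish in auto)

lemma first_weight_pos: "0 < A 0"
proof (rule ccontr)
  assume "\<not> 0 < A 0"
  then have "A j = 0" if "j \<le> n" for j
    using weight_quasi_mono[of 0 j] nonneg[of 0] nonneg[of j] that by simp
  then show False using sum_eq_1 by simp
qed

lemma first_weight_le_1: "A 0 \<le> 1"
  using sum_weights_le_1[of "{0}"] by simp

lemma sum_weights_split: "(\<Sum>k\<le>n. A k * g k) = (\<Sum>k<m. A k * g k) + (\<Sum>k=m..n. A k * g k)"
proof (cases "m \<le> n")
  case True
  then have "{..n} = {..<m} \<union> {m..n}" by auto
  then show ?thesis by (subst sum.union_disjoint[symmetric]) auto
next
  case False
  then have "(\<Sum>k<m. A k * g k) = (\<Sum>k\<le>n. A k * g k)"
    by (intro sum.mono_neutral_right) (auto simp: vanish)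
  with False show ?thesis by simp
qed

lemma abs_dirichlet_head_le: "\<bar>\<Sum>k<m. A k * dirichlet_kernel k t\<bar> \<le> real m"
proof -
  have "\<bar>\<Sum>k<m. A k * dirichlet_kernel k t\<bar> \<le> (\<Sum>k<m. A k * real m)"
  proof (rule order_trans[OF sum_abs sum_mono])
    fix k assume "k \<in> {..<m}"
    then have "real k + 1 \<le> real m" by simp
    then have "\<bar>dirichlet_kernel k t\<bar> \<le> real m"
      using abs_dirichlet_kernel_le[of k t] by linarith
    then show "\<bar>A k * dirichlet_kernel k t\<bar> \<le> A k * real m"
      by (simp add: abs_mult nonneg mult_left_mono)
  qed
  also have "\<dots> = (\<Sum>k<m. A k) * real m"
    by (simp add: sum_distrib_right)
  also have "\<dots> \<le> 1 * real m"
    by (intro mult_right_mono sum_weights_le_1) auto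
  finally show ?thesis by simp
qed

lemma abs_dirichlet_tail_le:
  assumes t: "0 < t" "t \<le> pi"
  shows "\<bar>\<Sum>k=m..n. A k * dirichlet_kernel k t\<bar> \<le> 36 * 2 powr \<beta> * C * A m / t^2"
proof (cases "m \<le> n")
  case True
  define s where "s = sin (t/2)"
  have s: "0 < s" unfolding s_def using t by (intro sin_gt_zero) auto
  have "t/6 \<le> s" unfolding s_def using t by (intro sin_half_ge_sixth) auto
  then have s_sq: "t^2/36 \<le> s^2"
    using t power_mono[of "t/6" s 2] by (simp add: power_divide)
  have term_eq: "2 * s * (A k * dirichlet_kernel k t) = A k * sin ((real k + 1/2) * t)" for k
  proof -
    have "2 * s * (A k * dirichlet_kernel k t) = A k * (2 * s * dirichlet_kernel k t)"
      by (simp add: mult_ac)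
    then show ?thesis by (simp add: s_def sin_half_mult_dirichlet_kernel)
  qed
  then have sum_eq: "2 * s * (\<Sum>k=m..n. A k * dirichlet_kernel k t) = (\<Sum>k=m..n. A k * sin ((real k + 1/2) * t))"
    by (simp only: sum_distrib_left term_eq)
  have "2 * s * \<bar>\<Sum>k=m..n. A k * dirichlet_kernel k t\<bar>
      = \<bar>2 * s * (\<Sum>k=m..n. A k * dirichlet_kernel k t)\<bar>"
    using s by (simp add: abs_mult)
  also have "\<dots> = \<bar>\<Sum>k=m..n. A k * sin ((real k + 1/2) * t)\<bar>"
    by (simp only: sum_eq)
  also have "\<dots> \<le> 2 * 2 powr \<beta> / s * (\<Sum>l=m..n. weighted_difference \<beta> A l)"
    unfolding s_def by (rule abs_weighted_sin_sum_le[of t \<beta> m n A, OF t beta_nonneg True vanish[OF lessI]])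
  also have "\<dots> \<le> 2 * 2 powr \<beta> / s * (C * A m)"
    using s by (intro mult_left_mono tail_variation_le[OF True]) auto
  finally have "\<bar>\<Sum>k=m..n. A k * dirichlet_kernel k t\<bar> \<le> 2 powr \<beta> * C * A m / s^2"
    using s by (simp add: field_simps power2_eq_square)
  also have "\<dots> \<le> 2 powr \<beta> * C * A m / (t^2/36)"
    using s s_sq t C_pos nonneg[of m] by (intro divide_left_mono) auto
  finally show ?thesis by (simp add: mult_ac)
qed (use C_pos nonneg in simp)

lemma abs_norlund_kernel_le_inverse_square:
  assumes t: "0 < t" "t \<le> pi"
  shows "\<bar>norlund_kernel A n t\<bar> \<le> kernel_bound * A 0 / t^2"
proof -
  have "\<bar>norlund_kernel A n t\<bar> \<le> 36 * 2 powr \<beta> * C * A 0 / t^2"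
    using abs_dirichlet_tail_le[OF t, of 0] by (simp add: norlund_kernel_def atLeast0AtMost)
  also have "\<dots> \<le> kernel_bound * A 0 / t^2"
    using C_pos nonneg[of 0] by (intro divide_right_mono mult_right_mono) (auto simp: algebra_simps)
  finally show ?thesis .
qed

lemma abs_norlund_kernel_le_inverse:
  assumes t: "0 < t" "t \<le> pi"
  shows "\<bar>norlund_kernel A n t\<bar> \<le> kernel_bound / t"
proof -
  \<comment> \<open>The head k < m is at most m <= 5/t; in the tail, A m <= C/(m+1) <= C t.\<close>
  define m where "m = nat \<lceil>1/t\<rceil>"
  have "0 < 1/t" using t by simp
  then have m: "1/t \<le> real m" "real m < 1/t + 1"
    unfolding m_def by linarith+
  then have m_le: "real m \<le> 5/t"
    using t pi_less_4 by (simp add: field_simps)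
  have "A m / t \<le> real (m + 1) * A m"
    using m nonneg[of m] mult_right_mono[of "1/t" "real m + 1" "A m"] by (simp add: algebra_simps)
  then have "A m \<le> t * (real (m + 1) * A m)"
    using t by (simp add: field_simps)
  also have "\<dots> \<le> t * C"
    using weight_decay[of m] t by (intro mult_left_mono) auto
  finally have A_m: "A m \<le> C * t"
    by (simp add: mult.commute)
  have "\<bar>norlund_kernel A n t\<bar>
      \<le> \<bar>\<Sum>k<m. A k * dirichlet_kernel k t\<bar> + \<bar>\<Sum>k=m..n. A k * dirichlet_kernel k t\<bar>"
    unfolding norlund_kernel_def sum_weights_split[of _ m] by (rule abs_triangle_ineq)
  also have "\<dots> \<le> real m + 36 * 2 powr \<beta> * C * A m / t^2"
    by (intro add_mono abs_dirichlet_head_le abs_dirichlet_tail_le t)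
  also have "\<dots> \<le> 5/t + 36 * 2 powr \<beta> * C * (C * t) / t^2"
    using m_le A_m C_pos by (intro add_mono divide_right_mono mult_left_mono) auto
  also have "\<dots> \<le> kernel_bound / t"
    using t C_pos by (simp add: field_simps power2_eq_square)
  finally show ?thesis .
qed

end

section \<open>Integral estimates\<close>

lemma mono_on_divide_square_integrable:
  fixes om :: "real \<Rightarrow> real"
  assumes mono: "mono_on {u..b} om" and u: "0 < u"
  shows "(\<lambda>t. om t / t^2) integrable_on {u..b}"
proof -
  define M where "M = \<bar>om u\<bar> + \<bar>om b\<bar>"
  have "(\<lambda>t. om t * (1 / t^2)) \<in> borel_measurable (lebesgue_on {u..b})"
    using u by (intro borel_measurable_times integrable_imp_measurable integrable_on_mono_on mono
        continuous_imp_measurable_on_sets_lebesgue continuous_intros) auto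
  then have "(\<lambda>t. om t * (1 / t^2)) integrable_on {u..b}"
  proof (rule measurable_bounded_by_integrable_imp_integrable_real)
    show "(\<lambda>t. M / u^2) integrable_on {u..b}" by (rule integrable_const_ivl)
    fix t assume t: "t \<in> {u..b}"
    then have "\<bar>om t\<bar> \<le> M"
      using mono_onD[OF mono, of u t] mono_onD[OF mono, of t b] by (auto simp: M_def)
    then have "\<bar>om t * (1 / t^2)\<bar> \<le> M / t^2"
      using t u by (simp add: abs_mult divide_right_mono)
    also have "\<dots> \<le> M / u^2"
      using t u \<open>\<bar>om t\<bar> \<le> M\<close> by (intro divide_left_mono power_mono) auto
    finally show "\<bar>om t * (1 / t^2)\<bar> \<le> M / u^2" .
  qed simp
  then show ?thesis by simp
qed

lemma has_integral_inverse_square: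
  fixes t b :: real
  assumes "0 < t" "t \<le> b"
  shows "((\<lambda>s. 1 / s^2) has_integral (1/t - 1/b)) {t..b}"
proof -
  have "((\<lambda>s. 1 / s^2) has_integral ((\<lambda>s. - 1 / s) b - (\<lambda>s. - 1 / s) t)) {t..b}"
  proof (rule fundamental_theorem_of_calculus[where f="\<lambda>s. - 1 / s" and a=t and b=b])
    fix x assume "x \<in> {t..b}"
    then have "x \<noteq> 0" using assms by auto
    then have "((\<lambda>s. - 1 / s) has_real_derivative 1 / x^2) (at x within {t..b})"
      by (auto intro!: derivative_eq_intros simp: power2_eq_square)
    then show "((\<lambda>s. - 1 / s) has_vector_derivative 1 / x^2) (at x within {t..b})"
      by (simp add: has_real_derivative_iff_has_vector_derivative)
  qed (use assms in simp)
  then show ?thesis by simp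
qed

lemma mono_on_mult_integral_inverse_square_le:
  fixes om :: "real \<Rightarrow> real"
  assumes mono: "mono_on {t..b} om" and t: "0 < t" "t \<le> b"
  shows "om t * (1/t - 1/b) \<le> integral {t..b} (\<lambda>s. om s / s^2)"
proof -
  have lower: "((\<lambda>s. om t * (1 / s^2)) has_integral om t * (1/t - 1/b)) {t..b}"
    by (intro has_integral_mult_right has_integral_inverse_square t)
  have le: "om t * (1 / s^2) \<le> om s / s^2" if "s \<in> {t..b}" for s
  proof -
    have "om t \<le> om s" using mono_onD[OF mono, of t s] that t by auto
    then show ?thesis by (simp add: divide_right_mono)
  qed
  show ?thesis
    using has_integral_le[OF lower integrable_integral[OF mono_on_divide_square_integrable[OF mono t(1)]]] le
    by blast
qed

lemma abs_integral_le_split: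
  fixes h g H :: "real \<Rightarrow> real"
  assumes l: "0 < l" "l \<le> b"
    and h_cont: "continuous_on {0..b} h" and h_0: "h 0 = 0"
    and h_near: "\<And>t. 0 < t \<Longrightarrow> t \<le> l \<Longrightarrow> \<bar>h t\<bar> \<le> D1 * H t"
    and h_far: "\<And>t. l \<le> t \<Longrightarrow> t \<le> b \<Longrightarrow> \<bar>h t\<bar> \<le> D2 * l * g t"
    and H_int: "H integrable_on {0..l}" and H_le: "integral {0..l} H \<le> c_H * (l * H l)"
    and g_int: "g integrable_on {l..b}" and g_le: "integral {l..b} g \<le> c_g * H l"
    and D: "0 \<le> D1" "0 \<le> D2"
  shows "\<bar>integral {0..b} h\<bar> \<le> (D1 * c_H + D2 * c_g) * (l * H l)"
proof -
  have h_int: "h integrable_on {u..v}" if "0 \<le> u" "v \<le> b" for u v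
    by (rule integrable_continuous_real) (rule continuous_on_subset[OF h_cont], use that in auto)
  \<comment> \<open>h_near says nothing at t = 0, so the majorant is changed there.\<close>
  define G where "G t = (if t = 0 then 0 else D1 * H t)" for t
  have D1_H_int: "(\<lambda>t. D1 * H t) integrable_on {0..l}"
    using H_int by (rule integrable_on_mult_right)
  have G_int: "G integrable_on {0..l}"
    by (rule integrable_spike[OF D1_H_int, of "{0}"]) (auto simp: G_def)
  have "h integrable_on {0..l}" using l by (intro h_int) auto
  then have "\<bar>integral {0..l} h\<bar> \<le> integral {0..l} G"
    using integral_norm_bound_integral[OF _ G_int] l h_near h_0 by (force simp: G_def)
  also have "integral {0..l} G = D1 * integral {0..l} H"
    using integral_spike[of "{0}" "{0..l}" "\<lambda>t. D1 * H t" G] by (simp add: G_def)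
  also have "\<dots> \<le> D1 * c_H * (l * H l)"
    using H_le D by (simp add: mult.assoc mult_left_mono)
  finally have near: "\<bar>integral {0..l} h\<bar> \<le> D1 * c_H * (l * H l)" .
  have "h integrable_on {l..b}" using l by (intro h_int) auto
  moreover have "(\<lambda>t. D2 * l * g t) integrable_on {l..b}"
    using g_int by (rule integrable_on_mult_right)
  ultimately have "\<bar>integral {l..b} h\<bar> \<le> integral {l..b} (\<lambda>t. D2 * l * g t)"
    using integral_norm_bound_integral l h_far by force
  also have "\<dots> = D2 * l * integral {l..b} g"
    by (simp add: integral_mult_right)
  also have "\<dots> \<le> D2 * l * (c_g * H l)"
    using g_le D l by (intro mult_left_mono) auto
  finally have far: "\<bar>integral {l..b} h\<bar> \<le> D2 * l * (c_g * H l)" .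
  have "integral {0..b} h = integral {0..l} h + integral {l..b} h"
    using l h_int[of 0 b] by (simp add: Henstock_Kurzweil_Integration.integral_combine)
  then have "\<bar>integral {0..b} h\<bar> \<le> \<bar>integral {0..l} h\<bar> + \<bar>integral {l..b} h\<bar>"
    by simp
  with near far show ?thesis by (simp add: algebra_simps)
qed

context norlund_weights
begin

context
  fixes om H :: "real \<Rightarrow> real" and c_om c_H :: real
  assumes om_mono: "mono_on {0..} om"
    and om_nonneg: "\<And>t. 0 \<le> t \<Longrightarrow> 0 \<le> om t"
    and H_nonneg: "\<And>u. 0 < u \<Longrightarrow> 0 \<le> H u"
    and c_om_nonneg: "0 \<le> c_om"
    and om_tail: "\<forall>u\<in>{0<..pi}. integral {u..pi} (\<lambda>t. om t / t^2) \<le> c_om * H u"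
    and H_head: "\<forall>t\<in>{0<..pi}. H integrable_on {0..t} \<and> integral {0..t} H \<le> c_H * (t * H t)"
begin

lemma om_div_le:
  assumes t: "0 < t" "t \<le> 1"
  shows "om t / t \<le> 2 * c_om * H t"
proof -
  have "1/pi \<le> 1/(2*t)" using t pi_gt3 by (intro divide_left_mono) auto
  then have "om t / t \<le> 2 * (om t * (1/t - 1/pi))"
    using om_nonneg[of t] t mult_left_mono[of "1/pi" "1/(2*t)" "om t"] by (simp add: field_simps)
  also have "\<dots> \<le> 2 * integral {t..pi} (\<lambda>s. om s / s^2)"
    using t pi_gt3 mono_on_subset[OF om_mono, of "{t..pi}"]
    by (intro mult_left_mono mono_on_mult_integral_inverse_square_le) auto
  also have "\<dots> \<le> 2 * (c_om * H t)"
    using t pi_gt3 om_tail by simp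
  finally show ?thesis by simp
qed

lemma om_mult_kernel_near_le:
  assumes t: "0 < t" "t \<le> A 0"
  shows "om t * \<bar>norlund_kernel A n t\<bar> \<le> kernel_bound * (2 * c_om) * H t"
proof -
  have t_le: "t \<le> 1" "t \<le> pi" using t first_weight_le_1 pi_gt3 by auto
  have "om t * \<bar>norlund_kernel A n t\<bar> \<le> om t * (kernel_bound / t)"
    using t t_le by (intro mult_left_mono abs_norlund_kernel_le_inverse om_nonneg) auto
  also have "\<dots> = kernel_bound * (om t / t)"
    by simp
  also have "\<dots> \<le> kernel_bound * (2 * c_om * H t)"
    using t t_le C_pos by (intro mult_left_mono om_div_le) auto
  finally show ?thesis by (simp add: mult_ac)
qed

lemma om_mult_kernel_far_le:
  assumes t: "A 0 \<le> t" "t \<le> pi"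
  shows "om t * \<bar>norlund_kernel A n t\<bar> \<le> kernel_bound * A 0 * (om t / t^2)"
proof -
  have "0 < t" using t first_weight_pos by linarith
  then have "om t * \<bar>norlund_kernel A n t\<bar> \<le> om t * (kernel_bound * A 0 / t^2)"
    using t by (intro mult_left_mono abs_norlund_kernel_le_inverse_square om_nonneg) auto
  then show ?thesis by (simp add: mult.commute)
qed

lemma abs_integral_kernel_le:
  assumes h_cont: "continuous_on {0..pi} h" and h_0: "h 0 = 0"
    and h_le: "\<And>t. 0 < t \<Longrightarrow> t \<le> pi \<Longrightarrow> \<bar>h t\<bar> \<le> om t * \<bar>norlund_kernel A n t\<bar>"
  shows "\<bar>integral {0..pi} h\<bar> \<le> kernel_bound * (2 * c_om * c_H + c_om) * (A 0 * H (A 0))"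
proof -
  define l where "l = A 0"
  have l: "0 < l" "l \<le> pi"
    unfolding l_def using first_weight_pos first_weight_le_1 pi_gt3 by auto
  have "\<bar>integral {0..pi} h\<bar> \<le> (kernel_bound * (2 * c_om) * c_H + kernel_bound * c_om) * (l * H l)"
  proof (rule abs_integral_le_split[OF l h_cont h_0])
    show "\<bar>h t\<bar> \<le> kernel_bound * (2 * c_om) * H t" if "0 < t" "t \<le> l" for t
      by (rule order_trans[OF h_le om_mult_kernel_near_le]) (use that l in \<open>auto simp: l_def\<close>)
    show "\<bar>h t\<bar> \<le> kernel_bound * l * (om t / t^2)" if "l \<le> t" "t \<le> pi" for t
      using that l unfolding l_def by (intro order_trans[OF h_le om_mult_kernel_far_le]) auto
    show "(\<lambda>t. om t / t^2) integrable_on {l..pi}"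
      using l mono_on_subset[OF om_mono, of "{l..pi}"] by (intro mono_on_divide_square_integrable) auto
    show "H integrable_on {0..l}" "integral {0..l} H \<le> c_H * (l * H l)"
      using l H_head by auto
    show "integral {l..pi} (\<lambda>t. om t / t^2) \<le> c_om * H l"
      using l om_tail by auto
    show "0 \<le> kernel_bound * (2 * c_om)" "0 \<le> kernel_bound"
      using C_pos c_om_nonneg by auto
  qed
  then show ?thesis by (simp add: l_def algebra_simps)
qed

lemma abs_norlund_deviation_le:
  fixes f :: "real \<Rightarrow> real"
  assumes cont: "continuous_on UNIV f" and f_om: "\<And>x h. \<bar>f (x + h) - f x\<bar> \<le> om \<bar>h\<bar>"
  shows "\<bar>(1/pi) * integral {-pi..pi} (\<lambda>t. (f (x + t) - f x) * norlund_kernel A n t)\<bar>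
           \<le> kernel_bound * (2 * c_om * c_H + c_om) * (A 0 * H (A 0))"
    (is "_ \<le> ?bound")
proof -
  define g where "g = (\<lambda>t. (f (x + t) - f x) * norlund_kernel A n t)"
  have g_cont: "continuous_on S g" for S
    unfolding g_def by (intro continuous_intros continuous_on_compose2[OF cont _ subset_UNIV])
  have g_int: "g integrable_on {u..v}" for u v
    by (rule integrable_continuous_real[OF g_cont])
  have g_le: "\<bar>g t\<bar> \<le> om \<bar>t\<bar> * \<bar>norlund_kernel A n t\<bar>" for t
    unfolding g_def abs_mult by (intro mult_right_mono f_om) simp
  have right: "\<bar>integral {0..pi} g\<bar> \<le> ?bound"
  proof (rule abs_integral_kernel_le[OF g_cont])
    fix t :: real assume "0 < t"
    then show "\<bar>g t\<bar> \<le> om t * \<bar>norlund_kernel A n t\<bar>" using g_le[of t] by simp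
  qed (simp add: g_def)
  have left: "\<bar>integral {0..pi} (\<lambda>t. g (-t))\<bar> \<le> ?bound"
  proof (rule abs_integral_kernel_le)
    show "continuous_on {0..pi} (\<lambda>t. g (-t))"
      by (intro continuous_on_compose2[OF g_cont[of UNIV]] continuous_intros) auto
    fix t :: real assume "0 < t"
    then show "\<bar>g (-t)\<bar> \<le> om t * \<bar>norlund_kernel A n t\<bar>" using g_le[of "-t"] by simp
  qed (simp add: g_def)
  have "integral {-pi..pi} g = integral {0..pi} (\<lambda>t. g (-t)) + integral {0..pi} g"
    using Henstock_Kurzweil_Integration.integral_combine[of "-pi" 0 pi g] g_int
      Henstock_Kurzweil_Integration.integral_reflect_real[of pi 0 "\<lambda>t. g (-t)"] by simp
  then have "\<bar>integral {-pi..pi} g\<bar> \<le> 2 * ?bound"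
    using left right by linarith
  moreover have "?bound * 2 \<le> ?bound * pi"
    using right pi_gt3 by (intro mult_left_mono) auto
  ultimately have "\<bar>integral {-pi..pi} g\<bar> \<le> ?bound * pi"
    by linarith
  then have "\<bar>integral {-pi..pi} g\<bar> / pi \<le> ?bound"
    by (simp add: pos_divide_le_eq)
  then show ?thesis
    unfolding g_def[symmetric] by (simp add: abs_mult)
qed

end

end

lemma norlund_weights_of_means:
  fixes p :: "nat \<Rightarrow> real" and a :: "nat \<Rightarrow> nat \<Rightarrow> real"
  assumes p_nonneg: "\<And>k. p k \<ge> 0"
    and P_def: "\<And>n. P n = (\<Sum>k\<le>n. p k)"
    and P_nz: "\<And>n. P n \<noteq> 0"
    and a_def: "\<And>n k. a n k = (if k \<le> n then p (n - k) / P n else 0)"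
    and beta: "\<beta> \<ge> 0"
    and cond: "\<exists>C>0. \<forall>n m. m \<le> n \<longrightarrow>
        (\<Sum>k. (real (k + m) + 1) powr \<beta> *
            \<bar>a n (k + m) / (real (k + m) + 1) powr \<beta>
             - a n (k + m + 1) / (real (k + m) + 2) powr \<beta>\<bar>) \<le> C * a n m"
  obtains C where "0 < C" "\<And>n. norlund_weights \<beta> C (a n) n"
proof -
  obtain C where C: "0 < C"
    and tail: "\<And>n m. m \<le> n \<Longrightarrow> (\<Sum>k. weighted_difference \<beta> (a n) (k + m)) \<le> C * a n m"
    using cond by (auto simp: weighted_difference_def add.commute[of 1] add.commute[of 2] numeral_2_eq_2)
  have "norlund_weights \<beta> C (a n) n" for n
  proof
    have "0 \<le> P n" unfolding P_def by (intro sum_nonneg p_nonneg)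
    with P_nz[of n] have P_pos: "0 < P n" by linarith
    show "0 \<le> a n k" for k using P_pos p_nonneg by (simp add: a_def)
    show "n < k \<Longrightarrow> a n k = 0" for k by (simp add: a_def)
    have "(\<Sum>k\<le>n. p (n - k)) = P n"
      using sum.atLeastAtMost_rev[of p 0 n] by (simp add: P_def atMost_atLeast0)
    then show "(\<Sum>k\<le>n. a n k) = 1"
      using P_pos by (simp add: a_def sum_divide_distrib[symmetric])
    show "(\<Sum>l=m..n. weighted_difference \<beta> (a n) l) \<le> C * a n m" if "m \<le> n" for m
    proof -
      have "(\<Sum>k. weighted_difference \<beta> (a n) (k + m))
          = (\<Sum>k<Suc n - m. weighted_difference \<beta> (a n) (k + m))"
        by (rule suminf_finite) (auto simp: weighted_difference_def a_def)
      also have "\<dots> = (\<Sum>l=m..n. weighted_difference \<beta> (a n) l)"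
        using that sum.atLeastAtMost_shift_0[OF that, of "weighted_difference \<beta> (a n)"]
        by (simp add: atLeast0AtMost lessThan_Suc_atMost[symmetric] Suc_diff_le add.commute)
      finally show ?thesis using tail[OF that] by simp
    qed
  qed (use beta C in auto)
  with C show ?thesis by (rule that)
qed

theorem corollary4p1:
  fixes f :: "real \<Rightarrow> real" and p :: "nat \<Rightarrow> real" and \<beta> :: real
    and H :: "real \<Rightarrow> real"
    and P :: "nat \<Rightarrow> real" and a :: "nat \<Rightarrow> nat \<Rightarrow> real"
  assumes cont: "continuous_on UNIV f"
    and periodic: "\<And>x. f (x + 2 * pi) = f x"
    and p_nonneg: "\<And>k. p k \<ge> 0"
    and P_def: "\<And>n. P n = (\<Sum>k\<le>n. p k)"
    and P_nz: "\<And>n. P n \<noteq> 0"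
    and a_def: "\<And>n k. a n k = (if k \<le> n then p (n - k) / P n else 0)"
    and beta: "\<beta> \<ge> 0"
    and cond: "\<exists>C>0. \<forall>n m. m \<le> n \<longrightarrow>
        (\<Sum>k. (real (k + m) + 1) powr \<beta> *
            \<bar>a n (k + m) / (real (k + m) + 1) powr \<beta>
             - a n (k + m + 1) / (real (k + m) + 2) powr \<beta>\<bar>) \<le> C * a n m"
    and H_nonneg: "\<And>u. u > 0 \<Longrightarrow> H u \<ge> 0"
    and H1: "\<exists>C>0. \<forall>u\<in>{0<..pi}.
        integral {u..pi} (\<lambda>t. modulus_of_continuity f t / t\<^sup>2) \<le> C * H u"
    and H2: "\<exists>C>0. \<forall>t\<in>{0<..pi}.
        H integrable_on {0..t} \<and> integral {0..t} H \<le> C * (t * H t)"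
  shows "\<exists>C>0. \<forall>n. sup_norm (\<lambda>x. norlund_mean p n f x - f x)
            \<le> C * ((p n / P n) * H (p n / P n))"
proof -
  obtain C where C: "0 < C" and weights: "\<And>n. norlund_weights \<beta> C (a n) n"
    using norlund_weights_of_means[OF p_nonneg P_def P_nz a_def beta cond] by blast
  from H1 obtain c_om where c_om: "0 < c_om"
    and om_tail: "\<forall>u\<in>{0<..pi}. integral {u..pi} (\<lambda>t. modulus_of_continuity f t / t\<^sup>2) \<le> c_om * H u"
    by blast
  from H2 obtain c_H where c_H: "0 < c_H"
    and H_head: "\<forall>t\<in>{0<..pi}. H integrable_on {0..t} \<and> integral {0..t} H \<le> c_H * (t * H t)"
    by blast
  obtain B where B: "\<And>y. \<bar>f y\<bar> \<le> B"
    using periodic_continuous_bounded[OF cont periodic] by blast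
  define K where "K = (5 + 36 * 2 powr \<beta> * C * (1 + C)) * (2 * c_om * c_H + c_om)"
  have "sup_norm (\<lambda>x. norlund_mean p n f x - f x) \<le> K * ((p n / P n) * H (p n / P n))" for n
  proof -
    interpret norlund_weights \<beta> C "a n" n by (rule weights)
    have deviation_eq: "norlund_mean p n f x - f x
        = (1/pi) * integral {-pi..pi} (\<lambda>t. (f (x + t) - f x) * norlund_kernel (a n) n t)" for x
      using P_nz[of n] by (intro norlund_mean_minus_eq_integral[OF cont periodic]) (auto simp: a_def P_def)
    have "\<bar>norlund_mean p n f x - f x\<bar> \<le> K * (a n 0 * H (a n 0))" for x
      unfolding K_def deviation_eq
      by (rule abs_norlund_deviation_le[OF mono_on_modulus_of_continuity[OF B]
          modulus_of_continuity_nonneg[OF B] H_nonneg less_imp_le[OF c_om] om_tail H_head cont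
          modulus_of_continuity_ge[OF B order_refl]])
    then show ?thesis unfolding sup_norm_def by (intro cSUP_least) (auto simp: a_def)
  qed
  moreover have "0 < K" unfolding K_def using C c_om c_H by (simp add: add_pos_pos)
  ultimately show ?thesis by blast
qed

end
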